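(* Let $E:\mathcal D(\mathcal H)\to[0,\infty)$ be a convex weak entanglement measure, and let $D$ be a contractive distance, convex in each argument, such that for every state the infimum defining $E_D$ is attained by some separable state. Let $\rho$ be a state with $E_D(\rho)>0$ and let $0\le\epsilon\le E_D(\rho)$. Then $$\inf\{E(\tau)\mid \tau\in\mathcal D(\mathcal H),\ E_D(\tau)=E_D(\rho)-\epsilon\}\ \le\ E^{(D)}_\epsilon(\rho)\ \le\ \Big(1-\frac{\epsilon}{E_D(\rho)}\Big)E(\rho).$$
   Context: $\mathcal H$ is a finite-dimensional multipartite Hilbert space, $\mathcal D(\mathcal H)$ its density matrices, $\mathcal S$ the separable states (convex combinations of product states). A distance $D$ is a metric on density matrices; convex in each argument means $D(p\rho_1+(1-p)\rho_2,\sigma)\le pD(\rho_1,\sigma)+(1-p)D(\rho_2,\sigma)$; contractive means $D(\Lambda[\rho],\Lambda[\sigma])\le D(\rho,\sigma)$ for every CPT map $\Lambda$. $E$ is a weak entanglement measure if $E(\rho)=0$ for all separable $\rho$ and $E(\Lambda_{\mathrm{LOCC}}[\rho])\le E(\rho)$ for every trace-preserving LOCC operation; convex means $E(p\rho_1+(1-p)\rho_2)\le pE(\rho_1)+(1-p)E(\rho_2)$. $E_D(\rho)=\inf_{\sigma\in\mathcal S}D(\rho,\sigma)$. For $\epsilon\ge0$, $E^{(D)}_\epsilon(\rho)=\inf\{E(\sigma)\mid \sigma\in\mathcal D(\mathcal H),\ D(\rho,\sigma)\le\epsilon\}$. *)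

theory Defs
  imports "HOL-Analysis.Analysis"
begin

text \<open>An operator on the Hilbert space with orthonormal basis indexed by a finite set I is
  represented by its matrix  A :: 'a => 'a => complex, required to vanish outside I x I.\<close>

type_synonym 'a cmat = "'a \<Rightarrow> 'a \<Rightarrow> complex"

definition is_op_on :: "'a set \<Rightarrow> 'a cmat \<Rightarrow> bool" where
  "is_op_on I A \<longleftrightarrow> (\<forall>i j. i \<notin> I \<or> j \<notin> I \<longrightarrow> A i j = 0)"

definition tr_on :: "'a set \<Rightarrow> 'a cmat \<Rightarrow> complex" where
  "tr_on I A = (\<Sum>i\<in>I. A i i)"

definition psd_on :: "'a set \<Rightarrow> 'a cmat \<Rightarrow> bool" where
  "psd_on I A \<longleftrightarrow> (\<forall>v :: 'a \<Rightarrow> complex.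
      0 \<le> Re (\<Sum>i\<in>I. \<Sum>j\<in>I. cnj (v i) * A i j * v j) \<and>
      Im (\<Sum>i\<in>I. \<Sum>j\<in>I. cnj (v i) * A i j * v j) = 0)"

definition density_on :: "'a set \<Rightarrow> 'a cmat \<Rightarrow> bool" where
  "density_on I A \<longleftrightarrow> is_op_on I A \<and> psd_on I A \<and> tr_on I A = 1"

definition mmul_on :: "'a set \<Rightarrow> 'a cmat \<Rightarrow> 'a cmat \<Rightarrow> 'a cmat" where
  "mmul_on I A B = (\<lambda>i j. \<Sum>k\<in>I. A i k * B k j)"

definition adj :: "'a cmat \<Rightarrow> 'a cmat" where
  "adj A = (\<lambda>i j. cnj (A j i))"

definition id_on :: "'a set \<Rightarrow> 'a cmat" where
  "id_on I = (\<lambda>i j. if i \<in> I \<and> i = j then 1 else 0)"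

definition mix :: "real \<Rightarrow> 'a cmat \<Rightarrow> 'a cmat \<Rightarrow> 'a cmat" where
  "mix p A B = (\<lambda>i j. complex_of_real p * A i j + complex_of_real (1 - p) * B i j)"

text \<open>The parties' local dimensions are the list ds; basis vectors of the composite space
  are indexed by tuples (lists) i with i!k < ds!k.\<close>

definition Idx :: "nat list \<Rightarrow> nat list set" where
  "Idx ds = {i. length i = length ds \<and> (\<forall>k<length ds. i ! k < ds ! k)}"

definition density :: "nat list \<Rightarrow> nat list cmat \<Rightarrow> bool" where
  "density ds \<rho> \<longleftrightarrow> density_on (Idx ds) \<rho>"

definition product_state :: "nat list \<Rightarrow> nat list cmat \<Rightarrow> bool" where
  "product_state ds \<rho> \<longleftrightarrow> (\<exists>\<sigma> :: nat \<Rightarrow> nat cmat.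
      (\<forall>k<length ds. density_on {..<ds ! k} (\<sigma> k)) \<and>
      \<rho> = (\<lambda>i j. if i \<in> Idx ds \<and> j \<in> Idx ds
                  then (\<Prod>k<length ds. \<sigma> k (i ! k) (j ! k)) else 0))"

definition separable :: "nat list \<Rightarrow> nat list cmat \<Rightarrow> bool" where
  "separable ds \<rho> \<longleftrightarrow> (\<exists>(n::nat) (p :: nat \<Rightarrow> real) (\<sigma> :: nat \<Rightarrow> nat list cmat).
      (\<forall>k<n. 0 \<le> p k \<and> product_state ds (\<sigma> k)) \<and> (\<Sum>k<n. p k) = 1 \<and>
      \<rho> = (\<lambda>i j. \<Sum>k<n. complex_of_real (p k) * \<sigma> k i j))"

text \<open>Extension Lambda (x) id_n of a map on operators of H to operators on H (x) C^n.\<close>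
definition ampl :: "(nat list cmat \<Rightarrow> nat list cmat) \<Rightarrow> (nat list \<times> nat) cmat \<Rightarrow> (nat list \<times> nat) cmat" where
  "ampl \<Lambda> X = (\<lambda>(i, a) (j, b). \<Lambda> (\<lambda>i' j'. X (i', a) (j', b)) i j)"

definition cpt :: "nat list \<Rightarrow> (nat list cmat \<Rightarrow> nat list cmat) \<Rightarrow> bool" where
  "cpt ds \<Lambda> \<longleftrightarrow>
     (\<forall>X. is_op_on (Idx ds) X \<longrightarrow> is_op_on (Idx ds) (\<Lambda> X)) \<and>
     (\<forall>(a::complex) (b::complex) X Y. is_op_on (Idx ds) X \<longrightarrow> is_op_on (Idx ds) Y \<longrightarrow>
        \<Lambda> (\<lambda>i j. a * X i j + b * Y i j) = (\<lambda>i j. a * \<Lambda> X i j + b * \<Lambda> Y i j)) \<and>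
     (\<forall>X. is_op_on (Idx ds) X \<longrightarrow> tr_on (Idx ds) (\<Lambda> X) = tr_on (Idx ds) X) \<and>
     (\<forall>(n::nat) X. is_op_on (Idx ds \<times> {..<n}) X \<longrightarrow> psd_on (Idx ds \<times> {..<n}) X \<longrightarrow>
        psd_on (Idx ds \<times> {..<n}) (ampl \<Lambda> X))"

text \<open>Local operator K acting on party k, i.e. id (x) ... (x) K (x) ... (x) id.\<close>
definition lift :: "nat list \<Rightarrow> nat \<Rightarrow> nat cmat \<Rightarrow> nat list cmat" where
  "lift ds k K = (\<lambda>i j. if i \<in> Idx ds \<and> j \<in> Idx ds \<and> (\<forall>l<length ds. l \<noteq> k \<longrightarrow> i ! l = j ! l)
                      then K (i ! k) (j ! k) else 0)"

text \<open>A local instrument at party k with outcomes j < J, each outcome j given by Kraus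
  operators K j m (m < M), summing to a trace-preserving operation.\<close>
definition local_instrument :: "nat list \<Rightarrow> nat \<Rightarrow> nat \<Rightarrow> nat \<Rightarrow> (nat \<Rightarrow> nat \<Rightarrow> nat cmat) \<Rightarrow> bool" where
  "local_instrument ds k J M K \<longleftrightarrow> k < length ds \<and>
     (\<forall>j<J. \<forall>m<M. is_op_on {..<ds ! k} (K j m)) \<and>
     (\<lambda>a b. \<Sum>j<J. \<Sum>m<M. mmul_on {..<ds ! k} (adj (K j m)) (K j m) a b) = id_on {..<ds ! k}"

text \<open>LOCC: the identity, and: a party performs a local instrument, broadcasts the outcome j,
  after which an LOCC operation depending on j is performed.\<close>
inductive_set LOCC :: "nat list \<Rightarrow> (nat list cmat \<Rightarrow> nat list cmat) set" for ds where
  LOCC_id: "(\<lambda>X. X) \<in> LOCC ds"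
| LOCC_step: "\<lbrakk>local_instrument ds k J M K; \<forall>j<J. \<Lambda>s j \<in> LOCC ds\<rbrakk> \<Longrightarrow>
    (\<lambda>X i i'. \<Sum>j<J. \<Lambda>s j
        (\<lambda>a b. \<Sum>m<M. mmul_on (Idx ds) (mmul_on (Idx ds) (lift ds k (K j m)) X)
                                     (adj (lift ds k (K j m))) a b) i i') \<in> LOCC ds"

definition weak_entanglement_measure :: "nat list \<Rightarrow> (nat list cmat \<Rightarrow> real) \<Rightarrow> bool" where
  "weak_entanglement_measure ds E \<longleftrightarrow>
     (\<forall>\<rho>. separable ds \<rho> \<longrightarrow> E \<rho> = 0) \<and>
     (\<forall>\<Lambda>\<in>LOCC ds. \<forall>\<rho>. density ds \<rho> \<longrightarrow> E (\<Lambda> \<rho>) \<le> E \<rho>)"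

definition convex_measure :: "nat list \<Rightarrow> (nat list cmat \<Rightarrow> real) \<Rightarrow> bool" where
  "convex_measure ds E \<longleftrightarrow> (\<forall>\<rho>1 \<rho>2 p. density ds \<rho>1 \<longrightarrow> density ds \<rho>2 \<longrightarrow> 0 \<le> p \<longrightarrow> p \<le> 1 \<longrightarrow>
      E (mix p \<rho>1 \<rho>2) \<le> p * E \<rho>1 + (1 - p) * E \<rho>2)"

definition distance :: "nat list \<Rightarrow> (nat list cmat \<Rightarrow> nat list cmat \<Rightarrow> real) \<Rightarrow> bool" where
  "distance ds D \<longleftrightarrow> (\<forall>\<rho> \<sigma> \<tau>. density ds \<rho> \<longrightarrow> density ds \<sigma> \<longrightarrow> density ds \<tau> \<longrightarrow>
      0 \<le> D \<rho> \<sigma> \<and> (D \<rho> \<sigma> = 0 \<longleftrightarrow> \<rho> = \<sigma>) \<and> D \<rho> \<sigma> = D \<sigma> \<rho> \<and> D \<rho> \<tau> \<le> D \<rho> \<sigma> + D \<sigma> \<tau>)"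

definition convex_each_arg :: "nat list \<Rightarrow> (nat list cmat \<Rightarrow> nat list cmat \<Rightarrow> real) \<Rightarrow> bool" where
  "convex_each_arg ds D \<longleftrightarrow> (\<forall>\<rho>1 \<rho>2 \<sigma> p. density ds \<rho>1 \<longrightarrow> density ds \<rho>2 \<longrightarrow> density ds \<sigma> \<longrightarrow>
      0 \<le> p \<longrightarrow> p \<le> 1 \<longrightarrow>
      D (mix p \<rho>1 \<rho>2) \<sigma> \<le> p * D \<rho>1 \<sigma> + (1 - p) * D \<rho>2 \<sigma> \<and>
      D \<sigma> (mix p \<rho>1 \<rho>2) \<le> p * D \<sigma> \<rho>1 + (1 - p) * D \<sigma> \<rho>2)"

definition contractive :: "nat list \<Rightarrow> (nat list cmat \<Rightarrow> nat list cmat \<Rightarrow> real) \<Rightarrow> bool" where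
  "contractive ds D \<longleftrightarrow> (\<forall>\<Lambda> \<rho> \<sigma>. cpt ds \<Lambda> \<longrightarrow> density ds \<rho> \<longrightarrow> density ds \<sigma> \<longrightarrow>
      D (\<Lambda> \<rho>) (\<Lambda> \<sigma>) \<le> D \<rho> \<sigma>)"

definition E_D :: "nat list \<Rightarrow> (nat list cmat \<Rightarrow> nat list cmat \<Rightarrow> real) \<Rightarrow> nat list cmat \<Rightarrow> real" where
  "E_D ds D \<rho> = Inf {D \<rho> \<sigma> | \<sigma>. separable ds \<sigma>}"

definition E_eps :: "nat list \<Rightarrow> (nat list cmat \<Rightarrow> real) \<Rightarrow> (nat list cmat \<Rightarrow> nat list cmat \<Rightarrow> real)
                     \<Rightarrow> real \<Rightarrow> nat list cmat \<Rightarrow> real" where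
  "E_eps ds E D \<epsilon> \<rho> = Inf {E \<sigma> | \<sigma>. density ds \<sigma> \<and> D \<rho> \<sigma> \<le> \<epsilon>}"

end

theory Submission
  imports Defs
begin

(*
  Upper bound: let sigma0 be a closest separable state to rho and p = eps / E_D(rho).
  The mixture tau = p sigma0 + (1-p) rho satisfies D(rho,tau) <= p D(rho,sigma0) = eps by
  convexity of D, and E(tau) <= p E(sigma0) + (1-p) E(rho) = (1-p) E(rho) by convexity of E,
  since E vanishes on separable states.

  Lower bound: take any state sigma with D(rho,sigma) <= eps and a closest separable state
  sigma' to sigma.  Along the segment t |-> t sigma' + (1-t) sigma the function E_D is
  Lipschitz (convexity of D plus the triangle inequality), it starts at
  E_D(sigma) >= E_D(rho) - eps and ends at E_D(sigma') = 0, so by the intermediate value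
  theorem some point tau of the segment has E_D(tau) = E_D(rho) - eps, while
  E(tau) <= E(sigma) by convexity of E.

  Both arguments need separable states to be density matrices, i.e. product states to be
  positive semidefinite.
*)

section \<open>Quadratic forms and positive semidefinite matrices\<close>

definition qf :: "'a set \<Rightarrow> 'a cmat \<Rightarrow> ('a \<Rightarrow> complex) \<Rightarrow> complex" where
  "qf I A v = (\<Sum>i\<in>I. \<Sum>j\<in>I. cnj (v i) * A i j * v j)"

lemma psd_qf: "psd_on I A \<longleftrightarrow> (\<forall>v. 0 \<le> Re (qf I A v) \<and> Im (qf I A v) = 0)"
  by (simp add: psd_on_def qf_def)

lemma qf_supp:
  assumes "finite I" "S \<subseteq> I" "\<forall>x\<in>I-S. v x = 0"
  shows "qf I A v = qf S A v"
proof -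
  have "qf I A v = (\<Sum>i\<in>I. \<Sum>j\<in>S. cnj (v i) * A i j * v j)"
    unfolding qf_def using assms by (intro sum.cong refl sum.mono_neutral_right) auto
  also have "\<dots> = qf S A v"
    unfolding qf_def using assms by (intro sum.mono_neutral_right) auto
  finally show ?thesis .
qed

lemma qf_two:
  assumes "finite I" "a \<in> I" "b \<in> I" "a \<noteq> b"
  shows "qf I A (\<lambda>x. if x = a then \<alpha> else if x = b then \<beta> else 0) =
     cnj \<alpha> * A a a * \<alpha> + cnj \<alpha> * A a b * \<beta> + cnj \<beta> * A b a * \<alpha> + cnj \<beta> * A b b * \<beta>"
proof -
  have "qf I A (\<lambda>x. if x = a then \<alpha> else if x = b then \<beta> else 0) =
        qf {a,b} A (\<lambda>x. if x = a then \<alpha> else if x = b then \<beta> else 0)"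
    using assms by (intro qf_supp) auto
  then show ?thesis using assms by (simp add: qf_def)
qed

lemma psd_diag:
  assumes "finite I" "psd_on I A" "a \<in> I"
  shows "A a a = of_real (Re (A a a))" "0 \<le> Re (A a a)"
proof -
  have "qf I A (\<lambda>x. if x = a then 1 else 0) = qf {a} A (\<lambda>x. if x = a then 1 else 0)"
    using assms by (intro qf_supp) auto
  then have "qf I A (\<lambda>x. if x = a then 1 else 0) = A a a" by (simp add: qf_def)
  then have "0 \<le> Re (A a a)" "Im (A a a) = 0"
    using assms(2) unfolding psd_qf by metis+
  then show "A a a = of_real (Re (A a a))" "0 \<le> Re (A a a)"
    by (simp_all add: complex_eq_iff)
qed

text \<open>Positive semidefinite matrices are Hermitian (the form is real on e_a + e_b and e_a + i e_b).\<close>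
lemma psd_herm:
  assumes "finite I" "psd_on I A" "a \<in> I" "b \<in> I"
  shows "A b a = cnj (A a b)"
proof (cases "a = b")
  case True
  then show ?thesis using psd_diag[OF assms(1,2,3)] by (metis complex_cnj_complex_of_real)
next
  case False
  have "Im (qf I A (\<lambda>x. if x = a then 1 else if x = b then 1 else 0)) = 0"
    using assms(2) by (simp add: psd_qf)
  then have re: "Im (A a a + A a b + A b a + A b b) = 0"
    using qf_two[OF assms(1,3,4) False, of A 1 1] by simp
  have "Im (qf I A (\<lambda>x. if x = a then 1 else if x = b then \<i> else 0)) = 0"
    using assms(2) by (simp add: psd_qf)
  then have im: "Im (A a a + A a b * \<i> - \<i> * A b a + A b b) = 0"
    using qf_two[OF assms(1,3,4) False, of A 1 \<i>] by (simp add: algebra_simps)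
  have "Im (A a a) = 0" "Im (A b b) = 0"
    using psd_diag[OF assms(1,2,3)] psd_diag[OF assms(1,2,4)] by (metis Im_complex_of_real)+
  then show ?thesis using re im by (intro complex_eqI) auto
qed

text \<open>A zero diagonal entry of a positive semidefinite matrix forces a zero row: otherwise the
  form on t e_a + e_b with a suitable scalar t would be negative.\<close>
lemma psd_zero_row:
  assumes "finite I" "psd_on I A" "a \<in> I" "b \<in> I" "A a a = 0"
  shows "A a b = 0"
proof (rule ccontr)
  assume nz: "A a b \<noteq> 0"
  then have ab: "a \<noteq> b" using assms by auto
  define z where "z = A a b"
  define q where "q = (cmod z)\<^sup>2"
  have qpos: "q > 0" using nz by (simp add: q_def z_def)
  define r where "r = (Re (A b b) + 1) / (2 * q)"
  define t where "t = - of_real r * z"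
  have "A b a = cnj z" using psd_herm[OF assms(1-4)] z_def by simp
  then have "qf I A (\<lambda>x. if x = a then t else if x = b then 1 else 0) =
        cnj t * z + cnj z * t + A b b"
    using qf_two[OF assms(1,3,4) ab, of A t 1] assms(5) z_def by simp
  also have "\<dots> = - of_real (2 * r * q) + A b b"
    unfolding t_def q_def by (simp add: complex_norm_square[symmetric] algebra_simps)
  finally have "0 \<le> - (2 * r * q) + Re (A b b)"
    using assms(2) unfolding psd_qf by (metis minus_complex.simps(1) Re_complex_of_real
        uminus_complex.sel(1) plus_complex.sel(1))
  moreover have "2 * r * q = Re (A b b) + 1" using qpos by (simp add: r_def)
  ultimately show False by simp
qed

section \<open>Positive semidefinite matrices are Gram matrices\<close>

text \<open>A Gram matrix A a b = sum over m of cnj(u_m a) u_m b is positive semidefinite: its form is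
  the sum of the squared moduli of the inner products of v with the u_m.\<close>
lemma gram_psd:
  assumes "finite M" "\<forall>a\<in>I. \<forall>b\<in>I. A a b = (\<Sum>m\<in>M. cnj (u m a) * u m b)"
  shows "psd_on I A"
  unfolding psd_qf
proof
  fix v
  have "qf I A v = (\<Sum>i\<in>I. \<Sum>j\<in>I. \<Sum>m\<in>M. cnj (u m i * v i) * (u m j * v j))"
    unfolding qf_def using assms(2)
    by (intro sum.cong refl) (simp add: sum_distrib_left sum_distrib_right mult_ac)
  also have "\<dots> = (\<Sum>i\<in>I. \<Sum>m\<in>M. \<Sum>j\<in>I. cnj (u m i * v i) * (u m j * v j))"
    by (intro sum.cong refl sum.swap)
  also have "\<dots> = (\<Sum>m\<in>M. \<Sum>i\<in>I. \<Sum>j\<in>I. cnj (u m i * v i) * (u m j * v j))"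
    by (rule sum.swap)
  also have "\<dots> = (\<Sum>m\<in>M. cnj (\<Sum>i\<in>I. u m i * v i) * (\<Sum>j\<in>I. u m j * v j))"
    by (intro sum.cong refl) (simp only: cnj_sum sum_product)
  also have "\<dots> = (\<Sum>m\<in>M. of_real ((cmod (\<Sum>j\<in>I. u m j * v j))\<^sup>2))"
    by (intro sum.cong refl) (metis complex_norm_square mult.commute)
  finally show "0 \<le> Re (qf I A v) \<and> Im (qf I A v) = 0"
    by (simp add: sum_nonneg flip: of_real_sum)
qed

lemma psd_restrict:
  assumes "finite I" "F \<subseteq> I" "psd_on I A"
  shows "psd_on F A"
  unfolding psd_qf
proof
  fix w
  define v where "v = (\<lambda>x. if x \<in> F then w x else (0::complex))"
  have "qf I A v = qf F A v" using assms by (intro qf_supp) (auto simp: v_def)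
  also have "\<dots> = qf F A w" unfolding qf_def v_def by (intro sum.cong refl) auto
  finally show "0 \<le> Re (qf F A w) \<and> Im (qf F A w) = 0"
    using assms(3) by (metis psd_qf)
qed

text \<open>Schur complement: if the pivot entry A a0 a0 is positive, then
  A a b - A a a0 A a0 b / A a0 a0 is positive semidefinite on the remaining indices, because its
  form at w equals the form of A at w extended by the coordinate -s / A a0 a0 at a0.\<close>
lemma psd_schur:
  assumes fin: "finite F" and a0: "a0 \<notin> F" and psd: "psd_on (insert a0 F) A"
    and cpos: "Re (A a0 a0) > 0"
  shows "psd_on F (\<lambda>a b. A a b - A a a0 * A a0 b / A a0 a0)"
  unfolding psd_qf
proof
  fix w
  let ?I = "insert a0 F" and ?S = "\<lambda>a b. A a b - A a a0 * A a0 b / A a0 a0"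
  define c where "c = A a0 a0"
  have fI: "finite ?I" using fin by simp
  have c: "c = of_real (Re c)" unfolding c_def by (rule psd_diag(1)[OF fI psd]) simp
  then have cc: "cnj c = c" by (metis complex_cnj_complex_of_real)
  have cnz: "c \<noteq> 0" using cpos c_def by auto
  define s where "s = (\<Sum>b\<in>F. A a0 b * w b)"
  define v where "v = (\<lambda>x. if x = a0 then - s / c else w x)"
  have herm: "\<And>a. a \<in> F \<Longrightarrow> A a a0 = cnj (A a0 a)"
    by (rule psd_herm[OF fI psd]) simp_all
  have cs: "(\<Sum>i\<in>F. cnj (w i) * A i a0) = cnj s"
    unfolding s_def cnj_sum by (intro sum.cong refl) (simp add: herm mult.commute)
  have vF: "\<And>x. x \<in> F \<Longrightarrow> v x = w x" using a0 unfolding v_def by auto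
  have split: "qf ?I A v = cnj (v a0) * c * v a0 + (\<Sum>j\<in>F. cnj (v a0) * A a0 j * v j)
      + ((\<Sum>i\<in>F. cnj (v i) * A i a0 * v a0) + (\<Sum>i\<in>F. \<Sum>j\<in>F. cnj (v i) * A i j * v j))"
    unfolding qf_def c_def using fin a0 by (simp add: sum.distrib)
  have row: "(\<Sum>j\<in>F. cnj (v a0) * A a0 j * v j) = cnj (v a0) * s"
    unfolding s_def sum_distrib_left by (intro sum.cong refl) (simp add: vF mult.assoc)
  have col: "(\<Sum>i\<in>F. cnj (v i) * A i a0 * v a0) = cnj s * v a0"
    unfolding cs[symmetric] sum_distrib_right by (intro sum.cong refl) (simp add: vF)
  have block: "(\<Sum>i\<in>F. \<Sum>j\<in>F. cnj (v i) * A i j * v j) = qf F A w"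
    unfolding qf_def by (intro sum.cong refl) (simp add: vF)
  have "qf ?I A v = (- cnj s / c) * c * (- s / c) + (- cnj s / c) * s + (cnj s * (- s / c) + qf F A w)"
    unfolding split row col block by (simp add: v_def cc)
  also have "\<dots> = qf F A w - cnj s * s / c"
    using cnz by (simp add: field_simps)
  also have "\<dots> = qf F ?S w"
  proof -
    have "qf F ?S w = (\<Sum>i\<in>F. \<Sum>j\<in>F. cnj (w i) * A i j * w j - (cnj (w i) * A i a0) * (A a0 j * w j) / c)"
      unfolding qf_def c_def
      by (intro sum.cong refl) (simp add: right_diff_distrib left_diff_distrib mult.assoc)
    also have "\<dots> = qf F A w - (\<Sum>i\<in>F. \<Sum>j\<in>F. (cnj (w i) * A i a0) * (A a0 j * w j)) / c"
      unfolding qf_def by (simp add: sum_subtractf sum_divide_distrib)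
    also have "\<dots> = qf F A w - ((\<Sum>i\<in>F. cnj (w i) * A i a0) * (\<Sum>j\<in>F. A a0 j * w j)) / c"
      by (simp only: sum_product)
    also have "\<dots> = qf F A w - cnj s * s / c"
      by (simp only: cs s_def[symmetric])
    finally show ?thesis by simp
  qed
  finally show "0 \<le> Re (qf F ?S w) \<and> Im (qf F ?S w) = 0"
    using psd unfolding psd_qf by metis
qed

definition gram_on :: "'a set \<Rightarrow> 'a cmat \<Rightarrow> bool" where
  "gram_on I A \<longleftrightarrow> (\<exists>(n::nat) u. \<forall>a\<in>I. \<forall>b\<in>I. A a b = (\<Sum>m<n. cnj (u m a) * u m b))"

text \<open>Induction step of the Cholesky decomposition for a zero pivot: row and column a0 vanish,
  so the generators on F extend by zero.\<close>
lemma gram_extend_zero_pivot: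
  assumes fin: "finite F" and psd: "psd_on (insert a0 F) A" and zero: "A a0 a0 = 0"
    and gram: "gram_on F A"
  shows "gram_on (insert a0 F) A"
proof -
  let ?I = "insert a0 F"
  have fI: "finite ?I" using fin by simp
  have row: "A a0 b = 0" and col: "A b a0 = 0" if "b \<in> ?I" for b
  proof -
    show "A a0 b = 0" using psd_zero_row[OF fI psd _ that zero] by simp
    then show "A b a0 = 0" using psd_herm[OF fI psd, of a0 b] that by simp
  qed
  obtain n :: nat and u where u: "\<forall>a\<in>F. \<forall>b\<in>F. A a b = (\<Sum>m<n. cnj (u m a) * u m b)"
    using gram unfolding gram_on_def by blast
  define u' where "u' = (\<lambda>m x. if x = a0 then 0 else u m x)"
  have "A a b = (\<Sum>m<n. cnj (u' m a) * u' m b)" if "a \<in> ?I" "b \<in> ?I" for a b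
    using that row col u by (cases "a = a0 \<or> b = a0") (auto simp: u'_def)
  then show ?thesis unfolding gram_on_def by blast
qed

text \<open>Induction step of the Cholesky decomposition for a positive pivot c = A a0 a0: prepend the
  generator x |-> A a0 x / sqrt c to generators of the Schur complement (extended by zero at a0).\<close>
lemma gram_extend_pos_pivot:
  assumes fin: "finite F" and psd: "psd_on (insert a0 F) A" and cpos: "Re (A a0 a0) > 0"
    and gram: "gram_on F (\<lambda>a b. A a b - A a a0 * A a0 b / A a0 a0)"
  shows "gram_on (insert a0 F) A"
proof -
  let ?I = "insert a0 F"
  have fI: "finite ?I" using fin by simp
  have herm: "cnj (A a0 a) = A a a0" if "a \<in> ?I" for a
    using psd_herm[OF fI psd, of a0 a] that by simp
  define r where "r = sqrt (Re (A a0 a0))"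
  have "of_real r * of_real r = (of_real (Re (A a0 a0)) :: complex)"
    using cpos unfolding r_def by (simp flip: of_real_mult)
  then have rr: "of_real r * of_real r = A a0 a0"
    using psd_diag(1)[OF fI psd, of a0] by simp
  have nz: "A a0 a0 \<noteq> 0" using cpos by auto
  obtain n :: nat and u where u: "\<forall>a\<in>F. \<forall>b\<in>F. A a b - A a a0 * A a0 b / A a0 a0
        = (\<Sum>m<n. cnj (u m a) * u m b)"
    using gram unfolding gram_on_def by blast
  define u' where "u' = (\<lambda>m x. case m of
      0 \<Rightarrow> A a0 x / of_real r
    | Suc k \<Rightarrow> (if x = a0 then 0 else u k x))"
  have "A a b = (\<Sum>m<Suc n. cnj (u' m a) * u' m b)" if ab: "a \<in> ?I" "b \<in> ?I" for a b
  proof -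
    have "cnj (u' 0 a) * u' 0 b = cnj (A a0 a) * A a0 b / (of_real r * of_real r)"
      by (simp add: u'_def)
    then have head: "cnj (u' 0 a) * u' 0 b = A a a0 * A a0 b / A a0 a0"
      unfolding rr herm[OF ab(1)] .
    have tail: "(\<Sum>m<n. cnj (u' (Suc m) a) * u' (Suc m) b) =
        (if a = a0 \<or> b = a0 then 0 else A a b - A a a0 * A a0 b / A a0 a0)"
      using ab u by (auto simp: u'_def)
    have "A a b = A a a0 * A a0 b / A a0 a0" if "a = a0 \<or> b = a0"
      using that nz by auto
    then show ?thesis
      unfolding sum.lessThan_Suc_shift head tail by simp
  qed
  then show ?thesis unfolding gram_on_def by blast
qed

lemma psd_gram:
  assumes "finite I" "psd_on I A"
  shows "gram_on I A"
  using assms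
proof (induction I arbitrary: A rule: finite_induct)
  case empty
  then show ?case by (simp add: gram_on_def)
next
  case (insert a0 F)
  have fI: "finite (insert a0 F)" using insert.hyps by simp
  have "0 \<le> Re (A a0 a0)" by (rule psd_diag(2)[OF fI insert.prems]) simp
  then consider "Re (A a0 a0) = 0" | "Re (A a0 a0) > 0" by linarith
  then show ?case
  proof cases
    case 1
    have "A a0 a0 = 0"
      using 1 psd_diag(1)[OF fI insert.prems, of a0] by (simp add: complex_eq_iff)
    moreover have "gram_on F A"
      by (rule insert.IH[OF psd_restrict[OF fI _ insert.prems]]) auto
    ultimately show ?thesis
      by (rule gram_extend_zero_pivot[OF insert.hyps(1) insert.prems])
  next
    case 2
    have "gram_on F (\<lambda>a b. A a b - A a a0 * A a0 b / A a0 a0)"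
      by (rule insert.IH[OF psd_schur[OF insert.hyps insert.prems 2]])
    then show ?thesis
      by (rule gram_extend_pos_pivot[OF insert.hyps(1) insert.prems 2])
  qed
qed

section \<open>Mixtures, product states and separable states are density matrices\<close>

lemma qf_lin2: "qf I (\<lambda>i j. a * A i j + b * B i j) v = a * qf I A v + b * qf I B v"
  unfolding qf_def by (simp add: algebra_simps sum.distrib sum_distrib_left)

lemma qf_linsum: "qf I (\<lambda>i j. \<Sum>k<n. c k * A k i j) v = (\<Sum>k<n. c k * qf I (A k) v)"
proof -
  have "qf I (\<lambda>i j. \<Sum>k<n. c k * A k i j) v =
      (\<Sum>i\<in>I. \<Sum>j\<in>I. \<Sum>k<n. c k * (cnj (v i) * A k i j * v j))"
    unfolding qf_def by (intro sum.cong refl) (simp add: sum_distrib_left sum_distrib_right mult_ac)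
  also have "\<dots> = (\<Sum>i\<in>I. \<Sum>k<n. \<Sum>j\<in>I. c k * (cnj (v i) * A k i j * v j))"
    by (intro sum.cong refl sum.swap)
  also have "\<dots> = (\<Sum>k<n. \<Sum>i\<in>I. \<Sum>j\<in>I. c k * (cnj (v i) * A k i j * v j))"
    by (rule sum.swap)
  also have "\<dots> = (\<Sum>k<n. c k * qf I (A k) v)"
    unfolding qf_def by (simp add: sum_distrib_left)
  finally show ?thesis .
qed

lemma mix_density:
  assumes "density ds A" "density ds B" "0 \<le> p" "p \<le> 1"
  shows "density ds (mix p A B)"
proof -
  have A: "is_op_on (Idx ds) A" "psd_on (Idx ds) A" "tr_on (Idx ds) A = 1"
    and B: "is_op_on (Idx ds) B" "psd_on (Idx ds) B" "tr_on (Idx ds) B = 1"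
    using assms(1,2) by (auto simp: density_def density_on_def)
  have "is_op_on (Idx ds) (mix p A B)"
    using A(1) B(1) by (simp add: is_op_on_def mix_def)
  moreover have "tr_on (Idx ds) (mix p A B) = 1"
    using A(3) B(3) unfolding tr_on_def mix_def
    by (simp add: sum.distrib sum_distrib_left[symmetric])
  moreover have "psd_on (Idx ds) (mix p A B)"
    using A(2) B(2) assms(3,4) unfolding psd_qf mix_def qf_lin2 by simp
  ultimately show ?thesis by (simp add: density_def density_on_def)
qed

lemma Idx_bij: "bij_betw (\<lambda>g. map g [0..<length ds]) (PiE {..<length ds} (\<lambda>k. {..<ds!k})) (Idx ds)"
proof (rule bij_betwI')
  fix x y assume x: "x \<in> PiE {..<length ds} (\<lambda>k. {..<ds!k})"
    and y: "y \<in> PiE {..<length ds} (\<lambda>k. {..<ds!k})"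
  show "(map x [0..<length ds] = map y [0..<length ds]) = (x = y)"
  proof
    assume m: "map x [0..<length ds] = map y [0..<length ds]"
    show "x = y"
    proof (rule PiE_ext[OF x y])
      fix k assume "k \<in> {..<length ds}"
      then show "x k = y k" using arg_cong[OF m, of "\<lambda>xs. xs ! k"] by simp
    qed
  qed simp
next
  fix x assume "x \<in> PiE {..<length ds} (\<lambda>k. {..<ds!k})"
  then show "map x [0..<length ds] \<in> Idx ds" by (auto simp: Idx_def PiE_def Pi_def)
next
  fix i assume i: "i \<in> Idx ds"
  let ?g = "restrict (\<lambda>k. i ! k) {..<length ds}"
  have "?g \<in> PiE {..<length ds} (\<lambda>k. {..<ds!k})" using i by (auto simp: Idx_def)
  moreover have "i = map ?g [0..<length ds]"
    using i by (intro nth_equalityI) (auto simp: Idx_def)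
  ultimately show "\<exists>g\<in>PiE {..<length ds} (\<lambda>k. {..<ds!k}). i = map g [0..<length ds]" by blast
qed

lemma sum_Idx_prod:
  "(\<Sum>i\<in>Idx ds. \<Prod>k<length ds. f k (i ! k)) = (\<Prod>k<length ds. \<Sum>a<ds!k. (f k a :: complex))"
proof -
  have "(\<Sum>i\<in>Idx ds. \<Prod>k<length ds. f k (i ! k)) =
      (\<Sum>g\<in>PiE {..<length ds} (\<lambda>k. {..<ds!k}). \<Prod>k<length ds. f k (map g [0..<length ds] ! k))"
    by (rule sum.reindex_bij_betw[OF Idx_bij, symmetric])
  also have "\<dots> = (\<Sum>g\<in>PiE {..<length ds} (\<lambda>k. {..<ds!k}). \<Prod>k<length ds. f k (g k))"
    by (intro sum.cong refl prod.cong) auto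
  also have "\<dots> = (\<Prod>k<length ds. \<Sum>a<ds!k. f k a)"
    by (rule prod_sum_PiE[symmetric]) auto
  finally show ?thesis .
qed

lemma tensor_gram:
  fixes n :: nat and N :: "nat \<Rightarrow> nat" and U :: "nat \<Rightarrow> nat \<Rightarrow> 'a \<Rightarrow> complex"
  assumes gram: "\<And>k. k < n \<Longrightarrow> \<sigma> k (x k) (y k) = (\<Sum>m<N k. cnj (U k m (x k)) * U k m (y k))"
  shows "(\<Prod>k<n. \<sigma> k (x k) (y k)) =
    (\<Sum>g\<in>PiE {..<n} (\<lambda>k. {..<N k}). cnj (\<Prod>k<n. U k (g k) (x k)) * (\<Prod>k<n. U k (g k) (y k)))"
proof -
  have "(\<Prod>k<n. \<sigma> k (x k) (y k)) = (\<Prod>k<n. \<Sum>m<N k. cnj (U k m (x k)) * U k m (y k))"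
    using gram by (intro prod.cong) auto
  also have "\<dots> = (\<Sum>g\<in>PiE {..<n} (\<lambda>k. {..<N k}).
      \<Prod>k<n. cnj (U k (g k) (x k)) * U k (g k) (y k))"
    by (rule prod_sum_PiE) auto
  also have "\<dots> = (\<Sum>g\<in>PiE {..<n} (\<lambda>k. {..<N k}).
      cnj (\<Prod>k<n. U k (g k) (x k)) * (\<Prod>k<n. U k (g k) (y k)))"
    by (simp add: prod.distrib)
  finally show ?thesis .
qed

text \<open>Product states are density matrices: the trace factorizes into the local traces, and
  positivity follows from the Gram factorizations of the local factors.\<close>
lemma product_density:
  assumes "product_state ds \<rho>"
  shows "density ds \<rho>"
proof -
  obtain \<sigma> where \<sigma>: "\<forall>k<length ds. density_on {..<ds ! k} (\<sigma> k)"
    and rho: "\<rho> = (\<lambda>i j. if i \<in> Idx ds \<and> j \<in> Idx ds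
                  then (\<Prod>k<length ds. \<sigma> k (i ! k) (j ! k)) else 0)"
    using assms unfolding product_state_def by blast
  have "tr_on (Idx ds) \<rho> = (\<Sum>i\<in>Idx ds. \<Prod>k<length ds. \<sigma> k (i ! k) (i ! k))"
    unfolding tr_on_def rho by (intro sum.cong refl) simp
  also have "\<dots> = (\<Prod>k<length ds. \<Sum>a<ds!k. \<sigma> k a a)"
    by (rule sum_Idx_prod)
  also have "\<dots> = 1"
    using \<sigma> by (intro prod.neutral ballI) (simp add: density_on_def tr_on_def)
  finally have tr: "tr_on (Idx ds) \<rho> = 1" .
  have "\<forall>k\<in>{..<length ds}. \<exists>(n::nat) u. \<forall>a\<in>{..<ds!k}. \<forall>b\<in>{..<ds!k}.
      \<sigma> k a b = (\<Sum>m<n. cnj (u m a) * u m b)"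
  proof
    fix k assume "k \<in> {..<length ds}"
    then have "psd_on {..<ds!k} (\<sigma> k)" using \<sigma> by (simp add: density_on_def)
    then show "\<exists>(n::nat) u. \<forall>a\<in>{..<ds!k}. \<forall>b\<in>{..<ds!k}. \<sigma> k a b = (\<Sum>m<n. cnj (u m a) * u m b)"
      using psd_gram[of "{..<ds!k}" "\<sigma> k"] unfolding gram_on_def by simp
  qed
  then obtain N :: "nat \<Rightarrow> nat" where "\<forall>k\<in>{..<length ds}. \<exists>u. \<forall>a\<in>{..<ds!k}. \<forall>b\<in>{..<ds!k}.
      \<sigma> k a b = (\<Sum>m<N k. cnj (u m a) * u m b)"
    by (rule bchoice[THEN exE])
  then obtain U where NU: "\<forall>k\<in>{..<length ds}. \<forall>a\<in>{..<ds!k}. \<forall>b\<in>{..<ds!k}.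
      \<sigma> k a b = (\<Sum>m<N k. cnj (U k m a) * U k m b)"
    by (rule bchoice[THEN exE])
  define W where "W g i = (\<Prod>k<length ds. U k (g k) (i ! k))" for g and i :: "nat list"
  have "\<rho> i j = (\<Sum>g\<in>PiE {..<length ds} (\<lambda>k. {..<N k}). cnj (W g i) * W g j)"
    if ij: "i \<in> Idx ds" "j \<in> Idx ds" for i j
  proof -
    have "\<rho> i j = (\<Prod>k<length ds. \<sigma> k (i ! k) (j ! k))" using ij by (simp add: rho)
    also have "\<dots> = (\<Sum>g\<in>PiE {..<length ds} (\<lambda>k. {..<N k}). cnj (W g i) * W g j)"
      unfolding W_def
    proof (rule tensor_gram)
      fix k assume k: "k < length ds"
      then have "i ! k \<in> {..<ds!k}" "j ! k \<in> {..<ds!k}" using ij by (auto simp: Idx_def)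
      then show "\<sigma> k (i ! k) (j ! k) = (\<Sum>m<N k. cnj (U k m (i ! k)) * U k m (j ! k))"
        using NU k by blast
    qed
    finally show ?thesis .
  qed
  then have "psd_on (Idx ds) \<rho>"
    by (intro gram_psd[of "PiE {..<length ds} (\<lambda>k. {..<N k})"] ballI finite_PiE) auto
  moreover have "is_op_on (Idx ds) \<rho>" by (simp add: is_op_on_def rho)
  ultimately show ?thesis using tr by (simp add: density_def density_on_def)
qed

lemma separable_density:
  assumes "separable ds \<rho>"
  shows "density ds \<rho>"
proof -
  obtain n :: nat and p :: "nat \<Rightarrow> real" and \<sigma>
    where h: "\<forall>k<n. 0 \<le> p k \<and> product_state ds (\<sigma> k)" and s1: "(\<Sum>k<n. p k) = 1"
      and rho: "\<rho> = (\<lambda>i j. \<Sum>k<n. complex_of_real (p k) * \<sigma> k i j)"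
    using assms unfolding separable_def by blast
  have d: "\<And>k. k < n \<Longrightarrow> density ds (\<sigma> k)" using h by (auto intro: product_density)
  have op: "is_op_on (Idx ds) \<rho>"
    using d unfolding rho is_op_on_def by (simp add: density_def density_on_def is_op_on_def)
  have "tr_on (Idx ds) \<rho> = (\<Sum>k<n. of_real (p k) * tr_on (Idx ds) (\<sigma> k))"
    unfolding rho tr_on_def by (subst sum.swap) (simp add: sum_distrib_left)
  also have "\<dots> = of_real (\<Sum>k<n. p k)"
    using d by (simp add: density_def density_on_def)
  finally have tr: "tr_on (Idx ds) \<rho> = 1" using s1 by simp
  have "psd_on (Idx ds) \<rho>"
    unfolding psd_qf
  proof
    fix v
    have "\<And>k. k < n \<Longrightarrow> 0 \<le> Re (qf (Idx ds) (\<sigma> k) v) \<and> Im (qf (Idx ds) (\<sigma> k) v) = 0"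
      using d by (simp add: density_def density_on_def psd_qf)
    then show "0 \<le> Re (qf (Idx ds) \<rho> v) \<and> Im (qf (Idx ds) \<rho> v) = 0"
      unfolding rho qf_linsum using h by (auto intro!: sum_nonneg)
  qed
  then show ?thesis using op tr by (simp add: density_def density_on_def)
qed

section \<open>The distance-based entanglement measure E_D\<close>

lemma dist_nonneg: "distance ds D \<Longrightarrow> density ds a \<Longrightarrow> density ds b \<Longrightarrow> 0 \<le> D a b"
  unfolding distance_def by blast

lemma dist_self: "distance ds D \<Longrightarrow> density ds a \<Longrightarrow> D a a = 0"
  unfolding distance_def by blast

lemma dist_sym: "distance ds D \<Longrightarrow> density ds a \<Longrightarrow> density ds b \<Longrightarrow> D a b = D b a"
  unfolding distance_def by blast

lemma dist_triangle:
  "distance ds D \<Longrightarrow> density ds a \<Longrightarrow> density ds b \<Longrightarrow> density ds c \<Longrightarrow> D a c \<le> D a b + D b c"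
  unfolding distance_def by blast

lemma E_D_lower:
  assumes "distance ds D" "density ds \<tau>" "separable ds \<sigma>"
  shows "E_D ds D \<tau> \<le> D \<tau> \<sigma>"
  unfolding E_D_def
proof (rule cInf_lower)
  show "D \<tau> \<sigma> \<in> {D \<tau> \<sigma> |\<sigma>. separable ds \<sigma>}" using assms(3) by blast
  show "bdd_below {D \<tau> \<sigma> |\<sigma>. separable ds \<sigma>}"
    using assms(1,2) by (intro bdd_belowI[of _ 0]) (auto intro: dist_nonneg separable_density)
qed

lemma E_D_nonneg:
  assumes "distance ds D" "density ds \<tau>" "separable ds \<sigma>"
  shows "0 \<le> E_D ds D \<tau>"
  unfolding E_D_def using assms by (intro cInf_greatest) (auto intro: dist_nonneg separable_density)

lemma E_D_separable:
  assumes "distance ds D" "separable ds \<sigma>"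
  shows "E_D ds D \<sigma> = 0"
  using E_D_lower[OF assms(1) _ assms(2)] E_D_nonneg[OF assms(1) _ assms(2)]
    dist_self[OF assms(1)] separable_density[OF assms(2)] by force

text \<open>E_D is 1-Lipschitz with respect to D, here in the one-sided form needed below.\<close>
lemma E_D_triangle:
  assumes "distance ds D" "density ds a" "density ds b"
    and "separable ds \<sigma>" "D b \<sigma> = E_D ds D b"
  shows "E_D ds D a \<le> D a b + E_D ds D b"
proof -
  have "E_D ds D a \<le> D a \<sigma>" by (rule E_D_lower[OF assms(1,2,4)])
  also have "\<dots> \<le> D a b + D b \<sigma>"
    by (rule dist_triangle[OF assms(1,2,3) separable_density[OF assms(4)]])
  finally show ?thesis using assms(5) by simp
qed

section \<open>E_D along a segment of states\<close>

lemma mix_0: "mix 0 A B = B" by (simp add: mix_def)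

lemma mix_1: "mix 1 A B = A" by (simp add: mix_def)

lemma mix_split:
  assumes "0 \<le> s" "s < 1" "s \<le> t"
  shows "mix t X Y = mix ((t - s) / (1 - s)) X (mix s X Y)"
proof -
  have ne: "1 - s \<noteq> 0" using assms by simp
  have compl: "1 - (t - s) / (1 - s) = (1 - t) / (1 - s)"
    using ne by (simp add: field_simps)
  have "(t - s) / (1 - s) + (1 - (t - s) / (1 - s)) * s = ((t - s) + (1 - t) * s) / (1 - s)"
    unfolding compl by (simp add: add_divide_distrib)
  also have "\<dots> = t" using ne by (simp add: field_simps)
  finally have a: "(t - s) / (1 - s) + (1 - (t - s) / (1 - s)) * s = t" .
  have b: "(1 - (t - s) / (1 - s)) * (1 - s) = 1 - t"
    unfolding compl using ne by simp
  have "mix l X (mix s X Y) i j =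
      complex_of_real (l + (1 - l) * s) * X i j + complex_of_real ((1 - l) * (1 - s)) * Y i j"
    for l i j by (simp add: mix_def algebra_simps)
  from this[of "(t - s) / (1 - s)"] show ?thesis unfolding a b by (auto simp: mix_def)
qed

text \<open>By convexity of D, moving along the segment from sigma to sigma' by a parameter step
  t - s changes the state by at most (t - s) D(sigma, sigma').\<close>
lemma mix_segment_dist:
  assumes D_dist: "distance ds D" and D_convex: "convex_each_arg ds D"
    and d\<sigma>': "density ds \<sigma>'" and d\<sigma>: "density ds \<sigma>"
    and st: "0 \<le> s" "s \<le> t" "t \<le> 1"
  shows "D (mix s \<sigma>' \<sigma>) (mix t \<sigma>' \<sigma>) \<le> (t - s) * D \<sigma> \<sigma>'"
proof (cases "s = 1")
  case True
  then show ?thesis using st dist_self[OF D_dist mix_density[OF d\<sigma>' d\<sigma>]] by simp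
next
  case False
  then have s1: "s < 1" using st by simp
  define l where "l = (t - s) / (1 - s)"
  have l: "0 \<le> l" "l \<le> 1" using st s1 by (simp_all add: l_def)
  have ds: "density ds (mix s \<sigma>' \<sigma>)" using st by (intro mix_density[OF d\<sigma>' d\<sigma>]) auto
  have "D (mix s \<sigma>' \<sigma>) (mix t \<sigma>' \<sigma>) = D (mix s \<sigma>' \<sigma>) (mix l \<sigma>' (mix s \<sigma>' \<sigma>))"
    unfolding l_def using st s1 by (simp flip: mix_split)
  also have "\<dots> \<le> l * D (mix s \<sigma>' \<sigma>) \<sigma>' + (1 - l) * D (mix s \<sigma>' \<sigma>) (mix s \<sigma>' \<sigma>)"
    using D_convex d\<sigma>' ds l unfolding convex_each_arg_def by blast
  also have "\<dots> = l * D (mix s \<sigma>' \<sigma>) \<sigma>'"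
    using dist_self[OF D_dist ds] by simp
  also have "\<dots> \<le> l * ((1 - s) * D \<sigma> \<sigma>')"
  proof (rule mult_left_mono[OF _ l(1)])
    have "D (mix s \<sigma>' \<sigma>) \<sigma>' \<le> s * D \<sigma>' \<sigma>' + (1 - s) * D \<sigma> \<sigma>'"
      using D_convex d\<sigma>' d\<sigma> st s1 unfolding convex_each_arg_def by simp
    then show "D (mix s \<sigma>' \<sigma>) \<sigma>' \<le> (1 - s) * D \<sigma> \<sigma>'"
      using dist_self[OF D_dist d\<sigma>'] by simp
  qed
  also have "\<dots> = (t - s) * D \<sigma> \<sigma>'" using s1 by (simp add: l_def)
  finally show ?thesis .
qed

lemma E_D_segment_lipschitz:
  assumes D_dist: "distance ds D" and D_convex: "convex_each_arg ds D"
    and D_attained: "\<forall>\<tau>. density ds \<tau> \<longrightarrow> (\<exists>\<sigma>. separable ds \<sigma> \<and> D \<tau> \<sigma> = E_D ds D \<tau>)"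
    and d\<sigma>': "density ds \<sigma>'" and d\<sigma>: "density ds \<sigma>"
  shows "(D \<sigma> \<sigma>')-lipschitz_on {0..1} (\<lambda>t. E_D ds D (mix t \<sigma>' \<sigma>))"
proof -
  let ?f = "\<lambda>t. E_D ds D (mix t \<sigma>' \<sigma>)" and ?K = "D \<sigma> \<sigma>'"
  have dens: "density ds (mix t \<sigma>' \<sigma>)" if "t \<in> {0..1}" for t
    using that by (intro mix_density[OF d\<sigma>' d\<sigma>]) auto
  have one_side: "?f a \<le> D (mix a \<sigma>' \<sigma>) (mix b \<sigma>' \<sigma>) + ?f b"
    if "a \<in> {0..1}" "b \<in> {0..1}" for a b
    using D_attained dens[OF that(2)] E_D_triangle[OF D_dist dens[OF that(1)] dens[OF that(2)]]
    by blast
  have ordered: "\<bar>?f s - ?f t\<bar> \<le> ?K * (t - s)" if st: "0 \<le> s" "s \<le> t" "t \<le> 1" for s t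
  proof -
    have "D (mix t \<sigma>' \<sigma>) (mix s \<sigma>' \<sigma>) = D (mix s \<sigma>' \<sigma>) (mix t \<sigma>' \<sigma>)"
      using st by (intro dist_sym[OF D_dist] dens) auto
    moreover have "D (mix s \<sigma>' \<sigma>) (mix t \<sigma>' \<sigma>) \<le> (t - s) * ?K"
      by (rule mix_segment_dist[OF D_dist D_convex d\<sigma>' d\<sigma> st])
    ultimately show ?thesis using one_side[of s t] one_side[of t s] st by (auto simp: mult.commute)
  qed
  show ?thesis
  proof (rule lipschitz_onI)
    fix x y :: real assume "x \<in> {0..1}" "y \<in> {0..1}"
    then show "dist (?f x) (?f y) \<le> ?K * dist x y"
      using ordered[of x y] ordered[of y x] by (cases "x \<le> y") (auto simp: dist_real_def abs_minus_commute)
  qed (rule dist_nonneg[OF D_dist d\<sigma> d\<sigma>'])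
qed

lemma E_D_segment_level:
  assumes D_dist: "distance ds D" and D_convex: "convex_each_arg ds D"
    and D_attained: "\<forall>\<tau>. density ds \<tau> \<longrightarrow> (\<exists>\<sigma>. separable ds \<sigma> \<and> D \<tau> \<sigma> = E_D ds D \<tau>)"
    and sep: "separable ds \<sigma>'" and d\<sigma>: "density ds \<sigma>"
    and c: "0 \<le> c" "c \<le> E_D ds D \<sigma>"
  shows "\<exists>t. 0 \<le> t \<and> t \<le> 1 \<and> E_D ds D (mix t \<sigma>' \<sigma>) = c"
proof -
  have "continuous_on {0..1} (\<lambda>t. E_D ds D (mix t \<sigma>' \<sigma>))"
    by (rule lipschitz_on_continuous_on[OF E_D_segment_lipschitz[OF D_dist D_convex D_attained
          separable_density[OF sep] d\<sigma>]])
  moreover have "E_D ds D (mix 1 \<sigma>' \<sigma>) = 0"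
    unfolding mix_1 by (rule E_D_separable[OF D_dist sep])
  moreover have "c \<le> E_D ds D (mix 0 \<sigma>' \<sigma>)" unfolding mix_0 by (rule c(2))
  ultimately show ?thesis using IVT2'[of "\<lambda>t. E_D ds D (mix t \<sigma>' \<sigma>)" 1 c 0] c(1) by auto
qed

text \<open>Upper bound witness: the mixture of rho with a closest separable state, with weight
  eps / E_D(rho) on the separable state.\<close>
lemma upper_bound_witness:
  assumes E_weak: "weak_entanglement_measure ds E" and E_convex: "convex_measure ds E"
    and D_dist: "distance ds D" and D_convex: "convex_each_arg ds D"
    and D_attained: "\<forall>\<tau>. density ds \<tau> \<longrightarrow> (\<exists>\<sigma>. separable ds \<sigma> \<and> D \<tau> \<sigma> = E_D ds D \<tau>)"
    and rho: "density ds \<rho>" and pos: "E_D ds D \<rho> > 0"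
    and eps: "0 \<le> \<epsilon>" "\<epsilon> \<le> E_D ds D \<rho>"
  shows "\<exists>\<tau>. density ds \<tau> \<and> D \<rho> \<tau> \<le> \<epsilon> \<and> E \<tau> \<le> (1 - \<epsilon> / E_D ds D \<rho>) * E \<rho>"
proof -
  obtain \<sigma> where sep: "separable ds \<sigma>" and closest: "D \<rho> \<sigma> = E_D ds D \<rho>"
    using D_attained rho by blast
  have d\<sigma>: "density ds \<sigma>" by (rule separable_density[OF sep])
  define p where "p = \<epsilon> / E_D ds D \<rho>"
  have p: "0 \<le> p" "p \<le> 1" using eps pos by (simp_all add: p_def)
  have "D \<rho> (mix p \<sigma> \<rho>) \<le> p * D \<rho> \<sigma> + (1 - p) * D \<rho> \<rho>"
    using D_convex d\<sigma> rho p unfolding convex_each_arg_def by blast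
  then have "D \<rho> (mix p \<sigma> \<rho>) \<le> \<epsilon>"
    using closest pos dist_self[OF D_dist rho] by (simp add: p_def)
  moreover have "E (mix p \<sigma> \<rho>) \<le> p * E \<sigma> + (1 - p) * E \<rho>"
    using E_convex d\<sigma> rho p unfolding convex_measure_def by blast
  then have "E (mix p \<sigma> \<rho>) \<le> (1 - p) * E \<rho>"
    using E_weak sep unfolding weak_entanglement_measure_def by simp
  ultimately show ?thesis using mix_density[OF d\<sigma> rho p] unfolding p_def by blast
qed

text \<open>Lower bound witness: every state sigma within D-distance eps of rho is beaten by a state
  tau on the segment towards a closest separable state of sigma with E_D(tau) = E_D(rho) - eps.\<close>
lemma lower_bound_witness:
  assumes E_nonneg: "\<forall>\<sigma>. density ds \<sigma> \<longrightarrow> 0 \<le> E \<sigma>"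
    and E_weak: "weak_entanglement_measure ds E" and E_convex: "convex_measure ds E"
    and D_dist: "distance ds D" and D_convex: "convex_each_arg ds D"
    and D_attained: "\<forall>\<tau>. density ds \<tau> \<longrightarrow> (\<exists>\<sigma>. separable ds \<sigma> \<and> D \<tau> \<sigma> = E_D ds D \<tau>)"
    and rho: "density ds \<rho>" and eps: "\<epsilon> \<le> E_D ds D \<rho>"
    and d\<sigma>: "density ds \<sigma>" and close: "D \<rho> \<sigma> \<le> \<epsilon>"
  shows "\<exists>\<tau>. density ds \<tau> \<and> E_D ds D \<tau> = E_D ds D \<rho> - \<epsilon> \<and> E \<tau> \<le> E \<sigma>"
proof -
  obtain \<sigma>' where sep: "separable ds \<sigma>'" and closest: "D \<sigma> \<sigma>' = E_D ds D \<sigma>"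
    using D_attained d\<sigma> by blast
  have d\<sigma>': "density ds \<sigma>'" by (rule separable_density[OF sep])
  have "E_D ds D \<rho> \<le> D \<rho> \<sigma> + E_D ds D \<sigma>"
    by (rule E_D_triangle[OF D_dist rho d\<sigma> sep closest])
  then obtain t where t: "0 \<le> t" "t \<le> 1" and level: "E_D ds D (mix t \<sigma>' \<sigma>) = E_D ds D \<rho> - \<epsilon>"
    using E_D_segment_level[OF D_dist D_convex D_attained sep d\<sigma>, of "E_D ds D \<rho> - \<epsilon>"] eps close
    by auto
  have "E (mix t \<sigma>' \<sigma>) \<le> t * E \<sigma>' + (1 - t) * E \<sigma>"
    using E_convex d\<sigma>' d\<sigma> t unfolding convex_measure_def by blast
  also have "\<dots> \<le> E \<sigma>"
    using E_weak sep E_nonneg d\<sigma> t unfolding weak_entanglement_measure_def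
    by (simp add: algebra_simps)
  finally show ?thesis using mix_density[OF d\<sigma>' d\<sigma> t] level by blast
qed

theorem mainTheorem9:
  fixes ds :: "nat list"
    and E :: "nat list cmat \<Rightarrow> real"
    and D :: "nat list cmat \<Rightarrow> nat list cmat \<Rightarrow> real"
    and \<rho> :: "nat list cmat"
    and \<epsilon> :: real
  assumes multipartite: "2 \<le> length ds"
    and E_nonneg: "\<forall>\<sigma>. density ds \<sigma> \<longrightarrow> 0 \<le> E \<sigma>"
    and E_weak: "weak_entanglement_measure ds E"
    and E_convex: "convex_measure ds E"
    and D_dist: "distance ds D"
    and D_contr: "contractive ds D"
    and D_convex: "convex_each_arg ds D"
    and D_attained: "\<forall>\<tau>. density ds \<tau> \<longrightarrow> (\<exists>\<sigma>. separable ds \<sigma> \<and> D \<tau> \<sigma> = E_D ds D \<tau>)"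
    and rho: "density ds \<rho>"
    and pos: "E_D ds D \<rho> > 0"
    and eps: "0 \<le> \<epsilon>" "\<epsilon> \<le> E_D ds D \<rho>"
  shows "Inf {E \<tau> | \<tau>. density ds \<tau> \<and> E_D ds D \<tau> = E_D ds D \<rho> - \<epsilon>} \<le> E_eps ds E D \<epsilon> \<rho>
       \<and> E_eps ds E D \<epsilon> \<rho> \<le> (1 - \<epsilon> / E_D ds D \<rho>) * E \<rho>"
proof
  let ?level = "{E \<tau> | \<tau>. density ds \<tau> \<and> E_D ds D \<tau> = E_D ds D \<rho> - \<epsilon>}"
  let ?ball = "{E \<sigma> | \<sigma>. density ds \<sigma> \<and> D \<rho> \<sigma> \<le> \<epsilon>}"
  have bdd: "bdd_below ?level" "bdd_below ?ball"
    using E_nonneg by (auto intro: bdd_belowI[of _ 0])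
  have "E \<rho> \<in> ?ball" using rho eps(1) dist_self[OF D_dist rho] by auto
  then show "Inf ?level \<le> E_eps ds E D \<epsilon> \<rho>"
    unfolding E_eps_def
  proof (intro cInf_greatest, blast)
    fix x assume "x \<in> ?ball"
    then obtain \<sigma> where "density ds \<sigma>" "D \<rho> \<sigma> \<le> \<epsilon>" "x = E \<sigma>" by blast
    then obtain \<tau> where "E \<tau> \<in> ?level" "E \<tau> \<le> x"
      using lower_bound_witness[OF E_nonneg E_weak E_convex D_dist D_convex D_attained rho eps(2)]
      by blast
    then show "Inf ?level \<le> x" using cInf_lower[OF _ bdd(1)] by fastforce
  qed
  obtain \<tau> where "density ds \<tau>" "D \<rho> \<tau> \<le> \<epsilon>" "E \<tau> \<le> (1 - \<epsilon> / E_D ds D \<rho>) * E \<rho>"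
    using upper_bound_witness[OF E_weak E_convex D_dist D_convex D_attained rho pos eps] by blast
  then show "E_eps ds E D \<epsilon> \<rho> \<le> (1 - \<epsilon> / E_D ds D \<rho>) * E \<rho>"
    unfolding E_eps_def using cInf_lower[OF _ bdd(2)] by fastforce
qed

end
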